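(* Let $\Lambda$ be a finite chain (path graph) with vertices $1,\dots,L$, $L\geq2$, and edges $(x,x+1)$ with arbitrary positive jump rates. For the symmetric simple exclusion process on $\Lambda$, $\lambda(n)=\lambda(1)$ for all $1\le n\le L-1$.
   Context: The SSEP with jump rates $c_{xy}>0$ has generator $(Lf)(\eta)=\sum_{x\sim y}c_{xy}(f(\eta)-f(\eta^{xy}))$ on functions on $\{0,1\}^\Lambda$, where $\eta^{xy}$ interchanges the values of $\eta$ at $x$ and $y$. $L$ preserves the space of functions supported on configurations with exactly $n$ particles ($\sum_x\eta(x)=n$), and $\lambda(n)$ is the smallest positive eigenvalue of $L$ restricted to this space. *)

theory Defs
  imports Complex_Main
begin

text \<open>Chain with vertices 1..L and edges (x, x+1), 1 <= x <= L-1.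
  A configuration eta in {0,1}^Lambda is represented by its set of occupied sites.\<close>

definition exch :: "nat \<Rightarrow> nat \<Rightarrow> nat set \<Rightarrow> nat set" where
  "exch x y A = (\<lambda>z. if z = x then y else if z = y then x else z) ` A"

definition configs :: "nat \<Rightarrow> nat \<Rightarrow> nat set set" where
  "configs L n = {A. A \<subseteq> {1..L} \<and> card A = n}"

definition ssep_gen :: "nat \<Rightarrow> (nat \<Rightarrow> real) \<Rightarrow> (nat set \<Rightarrow> real) \<Rightarrow> nat set \<Rightarrow> real" where
  "ssep_gen L c f A = (\<Sum>x\<in>{1..<L}. c x * (f A - f (exch x (x+1) A)))"

definition is_eigenvalue_n :: "nat \<Rightarrow> (nat \<Rightarrow> real) \<Rightarrow> nat \<Rightarrow> real \<Rightarrow> bool" where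
  "is_eigenvalue_n L c n \<mu> \<longleftrightarrow>
     (\<exists>f. (\<exists>A\<in>configs L n. f A \<noteq> 0) \<and> (\<forall>A\<in>configs L n. ssep_gen L c f A = \<mu> * f A))"

definition spectral_gap :: "nat \<Rightarrow> (nat \<Rightarrow> real) \<Rightarrow> nat \<Rightarrow> real" where
  "spectral_gap L c n = Inf {\<mu>. \<mu> > 0 \<and> is_eigenvalue_n L c n \<mu>}"

end

theory Submission
  imports Defs "HOL-Analysis.Analysis"
begin

text \<open>
  For one particle the exclusion process is the random walk on the chain, and summing a
  random-walk eigenfunction over the occupied sites gives an eigenfunction of the n-particle
  generator with the same eigenvalue; hence lambda(n) <= lambda(1).

  Conversely, the spectral gap gamma of the random walk is a Poincare constant for the exclusion
  process with any number of particles, by induction on the length of the chain. A mean-zero f on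
  n-particle configurations splits as f(A) = sum_{x in A} g(x) + w(A), the two parts being
  orthogonal both in l^2 and for the Dirichlet form, where w has vanishing one-site marginals. The
  first part is controlled by the Poincare inequality of the random walk. Restricted to the
  configurations with the last site empty, resp. occupied, w gives two mean-zero functions on the
  shorter chain; dropping the last edge only decreases the Dirichlet form, and the random-walk
  gap of the shorter chain is at least gamma, so the induction hypothesis bounds both pieces.
\<close>

section \<open>The exclusion generator\<close>

definition adj_swap :: "nat \<Rightarrow> nat \<Rightarrow> nat" where
  "adj_swap y z = (if z = y then Suc y else if z = Suc y then y else z)"

lemma exch_Suc_eq_image: "exch y (Suc y) A = adj_swap y ` A"
  unfolding exch_def adj_swap_def by simp

lemma adj_swap_adj_swap [simp]: "adj_swap y (adj_swap y z) = z"
  unfolding adj_swap_def by auto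

lemma inj_adj_swap: "inj (adj_swap y)"
  by (metis injI adj_swap_adj_swap)

lemma exch_exch [simp]: "exch y (Suc y) (exch y (Suc y) A) = A"
  unfolding exch_Suc_eq_image image_image by simp

lemma finite_configs [simp]: "finite (configs L n)"
  by (rule finite_subset[of _ "Pow {1..L}"]) (auto simp: configs_def)

lemma finite_config: "A \<in> configs L n \<Longrightarrow> finite A"
  unfolding configs_def by (auto intro: finite_subset)

lemma exch_in_configs:
  assumes "1 \<le> y" "y < L" "A \<in> configs L n"
  shows "exch y (Suc y) A \<in> configs L n"
proof -
  have "adj_swap y ` A \<subseteq> {1..L}"
    using assms unfolding configs_def adj_swap_def by auto
  moreover have "card (adj_swap y ` A) = card A"
    using inj_adj_swap by (rule card_image[OF inj_on_subset]) simp
  ultimately show ?thesis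
    using assms unfolding configs_def exch_Suc_eq_image by auto
qed

lemma sum_configs_exch:
  assumes "1 \<le> y" "y < L"
  shows "(\<Sum>A\<in>configs L n. h (exch y (Suc y) A)) = (\<Sum>A\<in>configs L n. h A)"
  by (rule sum.reindex_bij_witness[where i="exch y (Suc y)" and j="exch y (Suc y)"])
     (auto intro: exch_in_configs[OF assms])

lemma sum_mult_ssep_gen:
  "(\<Sum>A\<in>configs L n. f A * ssep_gen L c h A) =
   (\<Sum>y\<in>{1..<L}. c y * ((\<Sum>A\<in>configs L n. f A * h A)
                         - (\<Sum>A\<in>configs L n. f A * h (exch y (Suc y) A))))"
  unfolding ssep_gen_def sum_distrib_left
  by (subst sum.swap) (simp add: algebra_simps sum_subtractf sum_distrib_left)

lemma ssep_gen_symmetric: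
  "(\<Sum>A\<in>configs L n. f A * ssep_gen L c h A) = (\<Sum>A\<in>configs L n. h A * ssep_gen L c f A)"
proof -
  have "(\<Sum>A\<in>configs L n. f A * h (exch y (Suc y) A)) =
        (\<Sum>A\<in>configs L n. h A * f (exch y (Suc y) A))" if "y \<in> {1..<L}" for y
    using that sum_configs_exch[of y L "\<lambda>A. f A * h (exch y (Suc y) A)" n]
    by (simp add: mult.commute)
  then show ?thesis
    unfolding sum_mult_ssep_gen by (intro sum.cong) (auto simp: mult.commute)
qed

lemma sum_ssep_gen_eq_0: "(\<Sum>A\<in>configs L n. ssep_gen L c f A) = 0"
  using sum_mult_ssep_gen[where f="\<lambda>_. 1" and h=f] sum_configs_exch[of _ L f n] by simp

lemma ssep_dirichlet_form:
  "(\<Sum>A\<in>configs L n. f A * ssep_gen L c f A) =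
   (\<Sum>y\<in>{1..<L}. c y * (\<Sum>A\<in>configs L n. (f A - f (exch y (Suc y) A))\<^sup>2)) / 2"
proof -
  have "(\<Sum>A\<in>configs L n. (f A - f (exch y (Suc y) A))\<^sup>2) =
        2 * ((\<Sum>A\<in>configs L n. f A * f A) - (\<Sum>A\<in>configs L n. f A * f (exch y (Suc y) A)))"
    if "y \<in> {1..<L}" for y
  proof -
    have "(\<Sum>A\<in>configs L n. (f (exch y (Suc y) A))\<^sup>2) = (\<Sum>A\<in>configs L n. (f A)\<^sup>2)"
      using that sum_configs_exch[of y L "\<lambda>A. (f A)\<^sup>2" n] by simp
    then show ?thesis
      by (simp add: power2_diff sum.distrib sum_subtractf sum_distrib_left power2_eq_square
          algebra_simps)
  qed
  then show ?thesis
    unfolding sum_mult_ssep_gen sum_divide_distrib by (intro sum.cong) auto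
qed

lemma ssep_gen_add: "ssep_gen L c (\<lambda>A. u A + v A) A = ssep_gen L c u A + ssep_gen L c v A"
  unfolding ssep_gen_def by (simp add: sum.distrib[symmetric] algebra_simps)

section \<open>Lifting one-particle functions\<close>

definition rw_gen :: "nat \<Rightarrow> (nat \<Rightarrow> real) \<Rightarrow> (nat \<Rightarrow> real) \<Rightarrow> nat \<Rightarrow> real" where
  "rw_gen L c g x = (\<Sum>y\<in>{1..<L}. c y * (g x - g (adj_swap y x)))"

definition rw_energy :: "nat \<Rightarrow> (nat \<Rightarrow> real) \<Rightarrow> (nat \<Rightarrow> real) \<Rightarrow> real" where
  "rw_energy L c g = (\<Sum>y\<in>{1..<L}. c y * (g y - g (Suc y))\<^sup>2)"

definition particle_sum :: "(nat \<Rightarrow> real) \<Rightarrow> nat set \<Rightarrow> real" where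
  "particle_sum g A = (\<Sum>x\<in>A. g x)"

definition particle_proj :: "nat \<Rightarrow> nat \<Rightarrow> (nat set \<Rightarrow> real) \<Rightarrow> nat \<Rightarrow> real" where
  "particle_proj L n f x = (\<Sum>A\<in>{A\<in>configs L n. x \<in> A}. f A)"

lemma ssep_gen_particle_sum:
  assumes "finite A"
  shows "ssep_gen L c (particle_sum g) A = particle_sum (rw_gen L c g) A"
proof -
  have "ssep_gen L c (particle_sum g) A = (\<Sum>y\<in>{1..<L}. \<Sum>x\<in>A. c y * (g x - g (adj_swap y x)))"
    unfolding ssep_gen_def particle_sum_def
    by (simp add: exch_Suc_eq_image sum.reindex inj_on_subset[OF inj_adj_swap] sum_subtractf
        sum_distrib_left right_diff_distrib)
  also have "\<dots> = particle_sum (rw_gen L c g) A"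
    unfolding particle_sum_def rw_gen_def by (rule sum.swap)
  finally show ?thesis .
qed

lemma sum_mult_particle_sum:
  "(\<Sum>A\<in>configs L n. f A * particle_sum g A) = (\<Sum>x\<in>{1..L}. g x * particle_proj L n f x)"
proof -
  have "f A * particle_sum g A = (\<Sum>x\<in>{1..L}. if x \<in> A then f A * g x else 0)"
    if "A \<in> configs L n" for A
  proof -
    have "A = {1..L} \<inter> A" using that unfolding configs_def by auto
    then show ?thesis
      unfolding particle_sum_def sum_distrib_left by (metis finite_atLeastAtMost sum.inter_restrict)
  qed
  then have "(\<Sum>A\<in>configs L n. f A * particle_sum g A) =
             (\<Sum>A\<in>configs L n. \<Sum>x\<in>{1..L}. if x \<in> A then f A * g x else 0)"
    by (rule sum.cong[OF refl])
  also have "\<dots> = (\<Sum>x\<in>{1..L}. \<Sum>A\<in>configs L n. if x \<in> A then f A * g x else 0)"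
    by (rule sum.swap)
  also have "\<dots> = (\<Sum>x\<in>{1..L}. g x * particle_proj L n f x)"
    unfolding particle_proj_def
    by (simp add: sum.inter_filter sum_distrib_left mult.commute if_distrib cong: if_cong)
  finally show ?thesis .
qed

lemma sum_particle_proj:
  "(\<Sum>x\<in>{1..L}. particle_proj L n f x) = real n * (\<Sum>A\<in>configs L n. f A)"
proof -
  have "(\<Sum>A\<in>configs L n. f A * particle_sum (\<lambda>_. 1) A) = (\<Sum>A\<in>configs L n. real n * f A)"
    by (intro sum.cong) (auto simp: particle_sum_def configs_def)
  then show ?thesis
    using sum_mult_particle_sum[where g="\<lambda>_. 1"] by (simp add: sum_distrib_left)
qed

lemma sum_mult_rw_gen:
  "(\<Sum>x\<in>{1..L}. h x * rw_gen L c g x) =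
   (\<Sum>y\<in>{1..<L}. c y * ((h y - h (Suc y)) * (g y - g (Suc y))))"
proof -
  have "(\<Sum>x\<in>{1..L}. h x * (g x - g (adj_swap y x))) = (h y - h (Suc y)) * (g y - g (Suc y))"
    if "y \<in> {1..<L}" for y
  proof -
    have "(\<Sum>x\<in>{1..L}. h x * (g x - g (adj_swap y x))) = (\<Sum>x\<in>{y, Suc y}. h x * (g x - g (adj_swap y x)))"
      by (rule sum.mono_neutral_right) (use that in \<open>auto simp: adj_swap_def\<close>)
    then show ?thesis by (simp add: adj_swap_def algebra_simps)
  qed
  moreover have "(\<Sum>x\<in>{1..L}. h x * rw_gen L c g x) =
      (\<Sum>y\<in>{1..<L}. c y * (\<Sum>x\<in>{1..L}. h x * (g x - g (adj_swap y x))))"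
    unfolding rw_gen_def sum_distrib_left by (subst sum.swap) (simp add: algebra_simps)
  ultimately show ?thesis by simp
qed

lemma sum_mult_rw_gen_self: "(\<Sum>x\<in>{1..L}. g x * rw_gen L c g x) = rw_energy L c g"
  unfolding sum_mult_rw_gen rw_energy_def by (simp add: power2_eq_square)

lemma sum_rw_gen_eq_0: "(\<Sum>x\<in>{1..L}. rw_gen L c g x) = 0"
  using sum_mult_rw_gen[where h="\<lambda>_. 1"] by simp

lemma card_subsets_insert_containing:
  assumes "finite S" "x \<notin> S"
  shows "card {A. A \<subseteq> insert x S \<and> card A = Suc k \<and> x \<in> A} = card S choose k"
proof -
  let ?A = "{A. A \<subseteq> insert x S \<and> card A = Suc k \<and> x \<in> A}" and ?B = "{B. B \<subseteq> S \<and> card B = k}"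
  have "bij_betw (insert x) ?B ?A"
  proof (rule bij_betw_byWitness[where f'="\<lambda>A. A - {x}"])
    show "insert x ` ?B \<subseteq> ?A"
      using assms by (auto simp: finite_subset card_insert_if)
    show "(\<lambda>A. A - {x}) ` ?A \<subseteq> ?B"
      using assms by (auto simp: finite_subset)
  qed (use assms in auto)
  then show ?thesis
    using n_subsets[OF assms(1)] bij_betw_same_card by fastforce
qed

lemma card_configs_containing:
  assumes "x \<in> {1..L}"
  shows "card {A\<in>configs L (Suc k). x \<in> A} = (L - 1) choose k"
proof -
  have "{A\<in>configs L (Suc k). x \<in> A} =
        {A. A \<subseteq> insert x ({1..L} - {x}) \<and> card A = Suc k \<and> x \<in> A}"
    using assms unfolding configs_def by auto
  then show ?thesis
    using assms card_subsets_insert_containing[of "{1..L} - {x}" x k] by simp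
qed

lemma card_configs_containing_avoiding:
  assumes "x \<in> {1..L}" "z \<in> {1..L}" "x \<noteq> z"
  shows "card {A\<in>configs L (Suc k). x \<in> A \<and> z \<notin> A} = (L - 2) choose k"
proof -
  have "{A\<in>configs L (Suc k). x \<in> A \<and> z \<notin> A} =
        {A. A \<subseteq> insert x ({1..L} - {x, z}) \<and> card A = Suc k \<and> x \<in> A}"
    using assms unfolding configs_def by auto
  then show ?thesis
    using assms card_subsets_insert_containing[of "{1..L} - {x, z}" x k]
    by (simp add: numeral_2_eq_2)
qed

lemma particle_proj_particle_sum:
  assumes "x \<in> {1..L}" and mean_zero: "(\<Sum>z\<in>{1..L}. g z) = 0"
  shows "particle_proj L (Suc k) (particle_sum g) x = real ((L - 2) choose k) * g x"
proof -
  define N where "N = real ((L - 1) choose k)"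
  define a where "a = real ((L - 2) choose k)"
  let ?occ = "\<lambda>A. if x \<in> A then 1 else 0 :: real"
  have count: "particle_proj L (Suc k) ?occ z = N - a + (if z = x then a else 0)"
    if "z \<in> {1..L}" for z
  proof -
    have "particle_proj L (Suc k) ?occ z =
          real (card ({A\<in>configs L (Suc k). z \<in> A} \<inter> {A. x \<in> A}))"
      unfolding particle_proj_def by (simp add: sum.If_cases)
    also have "{A\<in>configs L (Suc k). z \<in> A} \<inter> {A. x \<in> A} =
               {A\<in>configs L (Suc k). x \<in> A \<and> z \<in> A}"
      by auto
    moreover have "card {A\<in>configs L (Suc k). x \<in> A} =
          card {A\<in>configs L (Suc k). x \<in> A \<and> z \<in> A} +
          card {A\<in>configs L (Suc k). x \<in> A \<and> z \<notin> A}"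
      by (subst card_Un_disjoint[symmetric]) (auto intro: arg_cong[where f=card])
    ultimately show ?thesis
      using assms(1) that card_configs_containing[of x L k] card_configs_containing_avoiding[of x L z k]
      unfolding N_def a_def by (cases "z = x") auto
  qed
  have "particle_proj L (Suc k) (particle_sum g) x =
        (\<Sum>A\<in>configs L (Suc k). ?occ A * particle_sum g A)"
    unfolding particle_proj_def by (simp add: sum.inter_filter) (intro sum.cong, auto)
  also have "\<dots> = (\<Sum>z\<in>{1..L}. g z * particle_proj L (Suc k) ?occ z)"
    by (rule sum_mult_particle_sum)
  also have "\<dots> = (\<Sum>z\<in>{1..L}. (N - a) * g z + (if z = x then a * g z else 0))"
    by (intro sum.cong) (auto simp: count algebra_simps)
  also have "\<dots> = a * g x"
    using assms by (simp add: sum.distrib sum_distrib_left[symmetric])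
  finally show ?thesis unfolding a_def .
qed

lemma inner_particle_sum:
  assumes "(\<Sum>x\<in>{1..L}. g x) = 0"
  shows "(\<Sum>A\<in>configs L (Suc k). particle_sum g A * particle_sum h A) =
         real ((L - 2) choose k) * (\<Sum>x\<in>{1..L}. g x * h x)"
proof -
  have "(\<Sum>A\<in>configs L (Suc k). particle_sum g A * particle_sum h A) =
        (\<Sum>x\<in>{1..L}. h x * (real ((L - 2) choose k) * g x))"
    unfolding sum_mult_particle_sum
    by (intro sum.cong) (auto simp: particle_proj_particle_sum[OF _ assms])
  then show ?thesis by (simp add: sum_distrib_left algebra_simps)
qed

section \<open>Poincare inequality for the exclusion process\<close>

definition rw_poincare :: "nat \<Rightarrow> (nat \<Rightarrow> real) \<Rightarrow> real \<Rightarrow> bool" where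
  "rw_poincare L c \<gamma> \<longleftrightarrow>
     (\<forall>g. (\<Sum>x\<in>{1..L}. g x) = 0 \<longrightarrow>
        \<gamma> * (\<Sum>x\<in>{1..L}. (g x)\<^sup>2) \<le> rw_energy L c g)"

definition ssep_poincare :: "nat \<Rightarrow> (nat \<Rightarrow> real) \<Rightarrow> real \<Rightarrow> bool" where
  "ssep_poincare L c \<gamma> \<longleftrightarrow>
     (\<forall>n f. (\<Sum>A\<in>configs L n. f A) = 0 \<longrightarrow>
        \<gamma> * (\<Sum>A\<in>configs L n. (f A)\<^sup>2) \<le> (\<Sum>A\<in>configs L n. f A * ssep_gen L c f A))"

lemma rw_poincare_restrict:
  assumes "0 \<le> \<gamma>" and "rw_poincare (Suc L) c \<gamma>"
  shows "rw_poincare L c \<gamma>"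
  unfolding rw_poincare_def
proof (intro allI impI)
  fix g :: "nat \<Rightarrow> real"
  assume mean_zero: "(\<Sum>x\<in>{1..L}. g x) = 0"
  \<comment> \<open>Continue \<open>g\<close> constantly across the new edge and recentre: the energy is
    unchanged and the norm does not decrease.\<close>
  define m where "m = g L / real (Suc L)"
  define g' where "g' x = (if x = Suc L then g L else g x) - m" for x
  have "(\<Sum>x\<in>{1..Suc L}. if x = Suc L then g L else g x) = g L"
    using mean_zero by simp
  then have "(\<Sum>x\<in>{1..Suc L}. g' x) = 0"
    unfolding g'_def sum_subtractf m_def by simp
  then have "\<gamma> * (\<Sum>x\<in>{1..Suc L}. (g' x)\<^sup>2) \<le> rw_energy (Suc L) c g'"
    using assms(2) unfolding rw_poincare_def by blast
  also have "rw_energy (Suc L) c g' = rw_energy L c g"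
    unfolding rw_energy_def by (auto simp: g'_def atLeastLessThanSuc intro: sum.cong)
  finally have "\<gamma> * (\<Sum>x\<in>{1..Suc L}. (g' x)\<^sup>2) \<le> rw_energy L c g" .
  moreover have "(\<Sum>x\<in>{1..L}. (g x)\<^sup>2) \<le> (\<Sum>x\<in>{1..Suc L}. (g' x)\<^sup>2)"
  proof -
    have "(\<Sum>x\<in>{1..L}. (g x)\<^sup>2) \<le> (\<Sum>x\<in>{1..L}. (g x)\<^sup>2) + real L * m\<^sup>2"
      by simp
    also have "\<dots> = (\<Sum>x\<in>{1..L}. (g x - m)\<^sup>2)"
      using mean_zero
      by (simp add: power2_diff sum.distrib sum_subtractf sum_distrib_left[symmetric]
          sum_distrib_right[symmetric] algebra_simps)
    also have "\<dots> = (\<Sum>x\<in>{1..L}. (g' x)\<^sup>2)"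
      by (intro sum.cong) (auto simp: g'_def)
    also have "\<dots> \<le> (\<Sum>x\<in>{1..Suc L}. (g' x)\<^sup>2)"
      by (rule sum_mono2) auto
    finally show ?thesis .
  qed
  ultimately show "\<gamma> * (\<Sum>x\<in>{1..L}. (g x)\<^sup>2) \<le> rw_energy L c g"
    using assms(1) by (meson mult_left_mono order_trans)
qed

lemma configs_subset_singleton:
  assumes "n = 0 \<or> L \<le> n"
  obtains A0 where "configs L n \<subseteq> {A0}"
proof (cases "n = 0")
  case True
  then have "configs L n \<subseteq> {{}}"
    unfolding configs_def by (auto dest: finite_subset[OF _ finite_atLeastAtMost])
  then show thesis by (rule that)
next
  case False
  have "configs L n \<subseteq> {{1..L}}"
  proof
    fix A assume "A \<in> configs L n"
    then have "A \<subseteq> {1..L}" "card {1..L} \<le> card A"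
      using False assms unfolding configs_def by auto
    then show "A \<in> {{1..L}}" using card_seteq by blast
  qed
  then show thesis by (rule that)
qed

lemma ssep_poincare_ineq_empty_or_full:
  assumes "n = 0 \<or> L \<le> n" and "(\<Sum>A\<in>configs L n. f A) = 0"
  shows "\<gamma> * (\<Sum>A\<in>configs L n. (f A)\<^sup>2) \<le> (\<Sum>A\<in>configs L n. f A * ssep_gen L c f A)"
proof -
  obtain A0 where "configs L n \<subseteq> {A0}"
    using assms(1) by (rule configs_subset_singleton)
  then have "\<forall>A\<in>configs L n. f A = 0"
    using assms(2) by (cases "configs L n = {}") (auto dest: subset_singletonD)
  then show ?thesis by simp
qed

lemma Suc_notin_config: "B \<in> configs L n \<Longrightarrow> Suc L \<notin> B"
  unfolding configs_def by auto

lemma configs_Suc: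
  "configs (Suc L) (Suc k) = configs L (Suc k) \<union> insert (Suc L) ` configs L k"
proof (intro equalityI subsetI)
  fix A assume A: "A \<in> configs (Suc L) (Suc k)"
  show "A \<in> configs L (Suc k) \<union> insert (Suc L) ` configs L k"
  proof (cases "Suc L \<in> A")
    case True
    then have "A = insert (Suc L) (A - {Suc L})" "A - {Suc L} \<in> configs L k"
      using A finite_config[OF A] unfolding configs_def by auto
    then show ?thesis by blast
  next
    case False
    then show ?thesis using A unfolding configs_def by (auto simp: le_Suc_eq)
  qed
next
  fix A assume "A \<in> configs L (Suc k) \<union> insert (Suc L) ` configs L k"
  then consider "A \<in> configs L (Suc k)" | B where "B \<in> configs L k" "A = insert (Suc L) B"
    by blast
  then show "A \<in> configs (Suc L) (Suc k)"
  proof cases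
    case 1
    then show ?thesis unfolding configs_def by auto
  next
    case 2
    then have "finite B" "Suc L \<notin> B" by (simp_all add: finite_config Suc_notin_config)
    then show ?thesis using 2 unfolding configs_def by auto
  qed
qed

lemma sum_configs_Suc:
  "(\<Sum>A\<in>configs (Suc L) (Suc k). F A) =
   (\<Sum>B\<in>configs L (Suc k). F B) + (\<Sum>B\<in>configs L k. F (insert (Suc L) B))"
proof -
  have "inj_on (insert (Suc L)) (configs L k)"
    by (rule inj_onI) (simp add: insert_ident Suc_notin_config)
  moreover have "configs L (Suc k) \<inter> insert (Suc L) ` configs L k = {}"
    unfolding configs_def by auto
  ultimately show ?thesis
    unfolding configs_Suc by (simp add: sum.union_disjoint sum.reindex)
qed

lemma exch_insert:
  assumes "M \<noteq> y" "M \<noteq> Suc y"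
  shows "exch y (Suc y) (insert M B) = insert M (exch y (Suc y) B)"
  using assms unfolding exch_Suc_eq_image by (simp add: adj_swap_def)

lemma ssep_poincare_ineq_Suc_if_proj_last_eq_0:
  assumes c: "\<And>y. 1 \<le> y \<Longrightarrow> y < Suc L \<Longrightarrow> 0 \<le> c y"
    and ssep: "ssep_poincare L c \<gamma>"
    and mean_zero: "(\<Sum>A\<in>configs (Suc L) (Suc k). w A) = 0"
    and proj_last: "particle_proj (Suc L) (Suc k) w (Suc L) = 0"
  shows "\<gamma> * (\<Sum>A\<in>configs (Suc L) (Suc k). (w A)\<^sup>2) \<le>
         (\<Sum>A\<in>configs (Suc L) (Suc k). w A * ssep_gen (Suc L) c w A)"
proof -
  define w1 where "w1 B = w (insert (Suc L) B)" for B
  have "particle_proj (Suc L) (Suc k) w (Suc L) = (\<Sum>B\<in>configs L k. w1 B)"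
    unfolding particle_proj_def sum.inter_filter[OF finite_configs] sum_configs_Suc w1_def
    by (simp add: Suc_notin_config)
  then have mean_zero1: "(\<Sum>B\<in>configs L k. w1 B) = 0"
    using proj_last by simp
  then have mean_zero0: "(\<Sum>B\<in>configs L (Suc k). w B) = 0"
    using mean_zero unfolding sum_configs_Suc w1_def by simp
  have edge_split: "(\<Sum>A\<in>configs (Suc L) (Suc k). (w A - w (exch y (Suc y) A))\<^sup>2) =
      (\<Sum>B\<in>configs L (Suc k). (w B - w (exch y (Suc y) B))\<^sup>2) +
      (\<Sum>B\<in>configs L k. (w1 B - w1 (exch y (Suc y) B))\<^sup>2)" if "y \<in> {1..<L}" for y
    using that unfolding sum_configs_Suc w1_def by (simp add: exch_insert)
  let ?D = "\<lambda>y. (\<Sum>A\<in>configs (Suc L) (Suc k). (w A - w (exch y (Suc y) A))\<^sup>2)"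
  have "(\<Sum>B\<in>configs L (Suc k). w B * ssep_gen L c w B) +
        (\<Sum>B\<in>configs L k. w1 B * ssep_gen L c w1 B) = (\<Sum>y\<in>{1..<L}. c y * ?D y) / 2"
    by (simp add: ssep_dirichlet_form edge_split distrib_left sum.distrib add_divide_distrib)
  also have "\<dots> \<le> (\<Sum>y\<in>{1..<Suc L}. c y * ?D y) / 2"
    by (intro divide_right_mono sum_mono2) (auto intro!: mult_nonneg_nonneg c sum_nonneg)
  also have "\<dots> = (\<Sum>A\<in>configs (Suc L) (Suc k). w A * ssep_gen (Suc L) c w A)"
    by (rule ssep_dirichlet_form[symmetric])
  finally have energy:
    "(\<Sum>B\<in>configs L (Suc k). w B * ssep_gen L c w B) +
     (\<Sum>B\<in>configs L k. w1 B * ssep_gen L c w1 B) \<le>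
     (\<Sum>A\<in>configs (Suc L) (Suc k). w A * ssep_gen (Suc L) c w A)" .
  moreover have "\<gamma> * (\<Sum>B\<in>configs L (Suc k). (w B)\<^sup>2) \<le>
      (\<Sum>B\<in>configs L (Suc k). w B * ssep_gen L c w B)"
    using ssep mean_zero0 unfolding ssep_poincare_def by blast
  moreover have "\<gamma> * (\<Sum>B\<in>configs L k. (w1 B)\<^sup>2) \<le> (\<Sum>B\<in>configs L k. w1 B * ssep_gen L c w1 B)"
    using ssep mean_zero1 unfolding ssep_poincare_def by blast
  moreover have "(\<Sum>A\<in>configs (Suc L) (Suc k). (w A)\<^sup>2) =
      (\<Sum>B\<in>configs L (Suc k). (w B)\<^sup>2) + (\<Sum>B\<in>configs L k. (w1 B)\<^sup>2)"
    unfolding sum_configs_Suc w1_def ..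
  ultimately show ?thesis
    by (simp add: distrib_left)
qed

lemma ssep_poincare_ineq_orthogonal_sum:
  assumes "(\<Sum>A\<in>configs L n. v A * w A) = 0"
    and "(\<Sum>A\<in>configs L n. w A * ssep_gen L c v A) = 0"
    and "\<gamma> * (\<Sum>A\<in>configs L n. (v A)\<^sup>2) \<le> (\<Sum>A\<in>configs L n. v A * ssep_gen L c v A)"
    and "\<gamma> * (\<Sum>A\<in>configs L n. (w A)\<^sup>2) \<le> (\<Sum>A\<in>configs L n. w A * ssep_gen L c w A)"
  shows "\<gamma> * (\<Sum>A\<in>configs L n. (v A + w A)\<^sup>2) \<le>
         (\<Sum>A\<in>configs L n. (v A + w A) * ssep_gen L c (\<lambda>A. v A + w A) A)"
proof -
  have "(\<Sum>A\<in>configs L n. v A * ssep_gen L c w A) = 0"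
    using assms(2) ssep_gen_symmetric by metis
  then have "(\<Sum>A\<in>configs L n. (v A + w A) * ssep_gen L c (\<lambda>A. v A + w A) A) =
      (\<Sum>A\<in>configs L n. v A * ssep_gen L c v A) + (\<Sum>A\<in>configs L n. w A * ssep_gen L c w A)"
    using assms(2) by (simp add: ssep_gen_add algebra_simps sum.distrib)
  moreover have "(\<Sum>A\<in>configs L n. (v A + w A)\<^sup>2) =
      (\<Sum>A\<in>configs L n. (v A)\<^sup>2) + (\<Sum>A\<in>configs L n. (w A)\<^sup>2)"
    using assms(1) by (simp add: power2_sum sum.distrib sum_distrib_left[symmetric] mult.assoc)
  ultimately show ?thesis
    using assms(3,4) by (simp add: distrib_left)
qed

lemma ssep_poincare_ineq_particle_sum:
  assumes rw: "rw_poincare L c \<gamma>" and mean_zero: "(\<Sum>x\<in>{1..L}. g x) = 0"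
  shows "\<gamma> * (\<Sum>A\<in>configs L (Suc k). (particle_sum g A)\<^sup>2) \<le>
         (\<Sum>A\<in>configs L (Suc k). particle_sum g A * ssep_gen L c (particle_sum g) A)"
proof -
  define a where "a = real ((L - 2) choose k)"
  have "\<gamma> * (\<Sum>A\<in>configs L (Suc k). (particle_sum g A)\<^sup>2) =
        a * (\<gamma> * (\<Sum>x\<in>{1..L}. (g x)\<^sup>2))"
    using inner_particle_sum[OF mean_zero, where h=g and k=k] unfolding a_def
    by (simp add: power2_eq_square)
  also have "\<dots> \<le> a * rw_energy L c g"
    using rw mean_zero unfolding rw_poincare_def a_def by (simp add: mult_left_mono)
  also have "\<dots> = (\<Sum>A\<in>configs L (Suc k). particle_sum g A * particle_sum (rw_gen L c g) A)"
    unfolding inner_particle_sum[OF mean_zero] sum_mult_rw_gen_self a_def ..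
  also have "\<dots> = (\<Sum>A\<in>configs L (Suc k). particle_sum g A * ssep_gen L c (particle_sum g) A)"
    by (intro sum.cong) (auto simp: ssep_gen_particle_sum finite_config)
  finally show ?thesis .
qed

lemma sum_mult_particle_sum_eq_0:
  assumes "\<And>x. x \<in> {1..L} \<Longrightarrow> particle_proj L n w x = 0"
  shows "(\<Sum>A\<in>configs L n. w A * particle_sum h A) = 0"
  by (simp add: sum_mult_particle_sum assms)

lemma ssep_poincare_ineq_Suc:
  assumes c: "\<And>y. 1 \<le> y \<Longrightarrow> y < Suc L \<Longrightarrow> 0 \<le> c y"
    and rw: "rw_poincare (Suc L) c \<gamma>" and ssep: "ssep_poincare L c \<gamma>"
    and "k < L" and mean_zero: "(\<Sum>A\<in>configs (Suc L) (Suc k). f A) = 0"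
  shows "\<gamma> * (\<Sum>A\<in>configs (Suc L) (Suc k). (f A)\<^sup>2) \<le>
         (\<Sum>A\<in>configs (Suc L) (Suc k). f A * ssep_gen (Suc L) c f A)"
proof -
  let ?C = "configs (Suc L) (Suc k)"
  define a where "a = real ((Suc L - 2) choose k)"
  have "a > 0" using \<open>k < L\<close> by (simp add: a_def)
  \<comment> \<open>By \<open>particle_proj_particle_sum\<close>, this \<open>g\<close> makes the one-site marginals of
    \<open>particle_sum g\<close> equal to those of \<open>f\<close>.\<close>
  define g where "g x = particle_proj (Suc L) (Suc k) f x / a" for x
  define w where "w A = f A - particle_sum g A" for A
  have g_mean_zero: "(\<Sum>x\<in>{1..Suc L}. g x) = 0"
    using mean_zero unfolding g_def sum_divide_distrib[symmetric] sum_particle_proj by simp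
  have w_proj: "particle_proj (Suc L) (Suc k) w x = 0" if "x \<in> {1..Suc L}" for x
  proof -
    have "particle_proj (Suc L) (Suc k) w x =
          particle_proj (Suc L) (Suc k) f x - particle_proj (Suc L) (Suc k) (particle_sum g) x"
      unfolding particle_proj_def w_def by (simp add: sum_subtractf)
    then show ?thesis
      using particle_proj_particle_sum[OF that g_mean_zero] \<open>a > 0\<close>
      unfolding g_def a_def by simp
  qed
  have w_mean_zero: "(\<Sum>A\<in>?C. w A) = 0"
    using sum_particle_proj[of "Suc L" "Suc k" w] w_proj by simp
  have "\<gamma> * (\<Sum>A\<in>?C. (particle_sum g A + w A)\<^sup>2) \<le>
        (\<Sum>A\<in>?C. (particle_sum g A + w A) * ssep_gen (Suc L) c (\<lambda>A. particle_sum g A + w A) A)"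
  proof (rule ssep_poincare_ineq_orthogonal_sum)
    show "(\<Sum>A\<in>?C. particle_sum g A * w A) = 0"
      using sum_mult_particle_sum_eq_0[OF w_proj, of g] by (simp add: mult.commute)
    have "(\<Sum>A\<in>?C. w A * ssep_gen (Suc L) c (particle_sum g) A) =
          (\<Sum>A\<in>?C. w A * particle_sum (rw_gen (Suc L) c g) A)"
      by (intro sum.cong) (auto simp: ssep_gen_particle_sum finite_config)
    then show "(\<Sum>A\<in>?C. w A * ssep_gen (Suc L) c (particle_sum g) A) = 0"
      using sum_mult_particle_sum_eq_0[OF w_proj] by simp
    show "\<gamma> * (\<Sum>A\<in>?C. (particle_sum g A)\<^sup>2) \<le>
          (\<Sum>A\<in>?C. particle_sum g A * ssep_gen (Suc L) c (particle_sum g) A)"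
      by (rule ssep_poincare_ineq_particle_sum[OF rw g_mean_zero])
    show "\<gamma> * (\<Sum>A\<in>?C. (w A)\<^sup>2) \<le> (\<Sum>A\<in>?C. w A * ssep_gen (Suc L) c w A)"
      using w_proj[of "Suc L"]
      by (intro ssep_poincare_ineq_Suc_if_proj_last_eq_0[OF c ssep w_mean_zero]) auto
  qed
  moreover have "f = (\<lambda>A. particle_sum g A + w A)"
    by (simp add: w_def)
  ultimately show ?thesis by simp
qed

lemma ssep_poincare_Suc:
  assumes c: "\<And>y. 1 \<le> y \<Longrightarrow> y < Suc L \<Longrightarrow> 0 \<le> c y"
    and rw: "rw_poincare (Suc L) c \<gamma>" and ssep: "ssep_poincare L c \<gamma>"
  shows "ssep_poincare (Suc L) c \<gamma>"
  unfolding ssep_poincare_def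
proof (intro allI impI)
  fix n and f :: "nat set \<Rightarrow> real"
  assume mean_zero: "(\<Sum>A\<in>configs (Suc L) n. f A) = 0"
  consider "n = 0 \<or> Suc L \<le> n" | k where "n = Suc k" "k < L"
    by (cases n) force+
  then show "\<gamma> * (\<Sum>A\<in>configs (Suc L) n. (f A)\<^sup>2) \<le>
      (\<Sum>A\<in>configs (Suc L) n. f A * ssep_gen (Suc L) c f A)"
  proof cases
    case 1
    then show ?thesis using mean_zero by (rule ssep_poincare_ineq_empty_or_full)
  next
    case 2
    then show ?thesis using ssep_poincare_ineq_Suc[OF c rw ssep] mean_zero by simp
  qed
qed

theorem ssep_poincare_of_rw_poincare:
  assumes "\<And>y. 1 \<le> y \<Longrightarrow> y < L \<Longrightarrow> 0 \<le> c y"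
    and "0 \<le> \<gamma>" and "rw_poincare L c \<gamma>"
  shows "ssep_poincare L c \<gamma>"
  using assms
proof (induction L)
  case 0
  then show ?case
    unfolding ssep_poincare_def by (auto intro: ssep_poincare_ineq_empty_or_full)
next
  case (Suc L)
  then show ?case
    using rw_poincare_restrict by (intro ssep_poincare_Suc) auto
qed

section \<open>The spectral gap of the random walk\<close>

lemma rw_energy_nonneg:
  assumes "\<And>y. 1 \<le> y \<Longrightarrow> y < L \<Longrightarrow> 0 \<le> c y"
  shows "0 \<le> rw_energy L c g"
  unfolding rw_energy_def using assms by (intro sum_nonneg) auto

lemma rw_energy_add_scaled:
  "rw_energy L c (\<lambda>x. g x + t * h x) =
   rw_energy L c g + 2 * t * (\<Sum>x\<in>{1..L}. h x * rw_gen L c g x) + t\<^sup>2 * rw_energy L c h"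
proof -
  have "c y * (g y + t * h y - (g (Suc y) + t * h (Suc y)))\<^sup>2 =
        c y * (g y - g (Suc y))\<^sup>2 + 2 * t * (c y * ((h y - h (Suc y)) * (g y - g (Suc y))))
        + t\<^sup>2 * (c y * (h y - h (Suc y))\<^sup>2)" for y
    by (simp add: power2_eq_square algebra_simps)
  then show ?thesis
    unfolding rw_energy_def sum_mult_rw_gen by (simp add: sum.distrib sum_distrib_left)
qed

lemma rw_energy_eq_0_imp_const:
  assumes "\<And>y. 1 \<le> y \<Longrightarrow> y < L \<Longrightarrow> 0 < c y"
    and "rw_energy L c g = 0" and "x \<in> {1..L}"
  shows "g x = g 1"
proof -
  have "0 \<le> c y" if "1 \<le> y" "y < L" for y
    using assms(1)[OF that] by simp
  then have "\<forall>y\<in>{1..<L}. c y * (g y - g (Suc y))\<^sup>2 = 0"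
    using assms(2) unfolding rw_energy_def
    by (subst sum_nonneg_eq_0_iff[symmetric]) auto
  then have step: "g (Suc y) = g y" if "1 \<le> y" "y < L" for y
  proof -
    have "c y * (g y - g (Suc y))\<^sup>2 = 0"
      using \<open>\<forall>y\<in>{1..<L}. c y * (g y - g (Suc y))\<^sup>2 = 0\<close> that by simp
    then show ?thesis using assms(1)[OF that] by simp
  qed
  have "1 \<le> x" "x \<le> L" using assms(3) by auto
  then show ?thesis
    by (induction x rule: dec_induct) (auto simp: step)
qed

lemma quadratic_nonneg_imp_linear_coeff_0:
  fixes B C :: real
  assumes "\<And>t. 0 \<le> 2 * t * B + t\<^sup>2 * C"
  shows "B = 0"
proof (rule ccontr)
  assume "B \<noteq> 0"
  define D where "D = \<bar>C\<bar> + 1"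
  have "D > 0" "C < D" unfolding D_def by auto
  have "0 \<le> 2 * (- B / D) * B + (- B / D)\<^sup>2 * C"
    by (rule assms)
  then have "0 \<le> D\<^sup>2 * (2 * (- B / D) * B + (- B / D)\<^sup>2 * C)"
    by simp
  also have "\<dots> = B\<^sup>2 * (C - 2 * D)"
    using \<open>D > 0\<close> by (simp add: field_simps power2_eq_square)
  also have "\<dots> < 0"
    using \<open>B \<noteq> 0\<close> \<open>C < D\<close> \<open>D > 0\<close> by (simp add: mult_pos_neg)
  finally show False by simp
qed

lemma rw_gen_eq_if_poincare_equality:
  assumes rw: "rw_poincare L c \<gamma>" and mean_zero: "(\<Sum>x\<in>{1..L}. g x) = 0"
    and equality: "rw_energy L c g = \<gamma> * (\<Sum>x\<in>{1..L}. (g x)\<^sup>2)"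
  shows "\<forall>x\<in>{1..L}. rw_gen L c g x = \<gamma> * g x"
proof -
  define r where "r x = rw_gen L c g x - \<gamma> * g x" for x
  have first_variation: "(\<Sum>x\<in>{1..L}. h x * r x) = 0"
    if h_mean_zero: "(\<Sum>x\<in>{1..L}. h x) = 0" for h
  proof (rule quadratic_nonneg_imp_linear_coeff_0)
    fix t :: real
    define u where "u x = g x + t * h x" for x
    have "(\<Sum>x\<in>{1..L}. u x) = 0"
      unfolding u_def using mean_zero h_mean_zero by (simp add: sum.distrib sum_distrib_left[symmetric])
    then have "\<gamma> * (\<Sum>x\<in>{1..L}. (u x)\<^sup>2) \<le> rw_energy L c u"
      using rw unfolding rw_poincare_def by blast
    also have "rw_energy L c u =
        rw_energy L c g + 2 * t * (\<Sum>x\<in>{1..L}. h x * rw_gen L c g x) + t\<^sup>2 * rw_energy L c h"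
      unfolding u_def by (rule rw_energy_add_scaled)
    finally have ineq: "\<gamma> * (\<Sum>x\<in>{1..L}. (u x)\<^sup>2) \<le>
        rw_energy L c g + 2 * t * (\<Sum>x\<in>{1..L}. h x * rw_gen L c g x) + t\<^sup>2 * rw_energy L c h" .
    have norm: "(\<Sum>x\<in>{1..L}. (u x)\<^sup>2) = (\<Sum>x\<in>{1..L}. (g x)\<^sup>2) +
        2 * t * (\<Sum>x\<in>{1..L}. h x * g x) + t\<^sup>2 * (\<Sum>x\<in>{1..L}. (h x)\<^sup>2)"
      unfolding u_def
      by (simp add: power2_sum power_mult_distrib sum.distrib sum_distrib_left algebra_simps)
    have lin: "(\<Sum>x\<in>{1..L}. h x * r x) =
        (\<Sum>x\<in>{1..L}. h x * rw_gen L c g x) - \<gamma> * (\<Sum>x\<in>{1..L}. h x * g x)"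
      unfolding r_def by (simp add: right_diff_distrib sum_subtractf sum_distrib_left mult.left_commute)
    show "0 \<le> 2 * t * (\<Sum>x\<in>{1..L}. h x * r x) +
        t\<^sup>2 * (rw_energy L c h - \<gamma> * (\<Sum>x\<in>{1..L}. (h x)\<^sup>2))"
      using ineq unfolding norm lin equality by (simp add: algebra_simps)
  qed
  have "(\<Sum>x\<in>{1..L}. r x) = 0"
    unfolding r_def using mean_zero sum_rw_gen_eq_0[of L c g]
    by (simp add: sum_subtractf sum_distrib_left[symmetric])
  then have "(\<Sum>x\<in>{1..L}. r x * r x) = 0"
    by (rule first_variation)
  then have "\<forall>x\<in>{1..L}. r x * r x = 0"
    by (subst sum_nonneg_eq_0_iff[symmetric]) auto
  then show ?thesis unfolding r_def by simp
qed

text \<open>Coordinates outside the chain are pinned to \<open>0\<close> so that the set is compact in the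
  product topology on \<open>nat \<Rightarrow> real\<close>.\<close>
definition normalized_mean_zero :: "nat \<Rightarrow> (nat \<Rightarrow> real) set" where
  "normalized_mean_zero L =
     {g. g \<in> Pi\<^sub>E UNIV (\<lambda>x. if x \<in> {1..L} then cball 0 1 else {0}) \<and>
         (\<Sum>x\<in>{1..L}. g x) = 0 \<and> (\<Sum>x\<in>{1..L}. (g x)\<^sup>2) = 1}"

lemma compact_normalized_mean_zero: "compact (normalized_mean_zero L)"
proof -
  have "compactin (product_topology (\<lambda>_. euclidean) UNIV)
          (Pi\<^sub>E UNIV (\<lambda>x::nat. if x \<in> {1..L} then cball (0::real) 1 else {0}))"
    by (subst compactin_PiE) auto
  then have "compact (Pi\<^sub>E UNIV (\<lambda>x::nat. if x \<in> {1..L} then cball (0::real) 1 else {0}))"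
    by (simp add: euclidean_product_topology)
  moreover have
    "closed {g::nat \<Rightarrow> real. (\<Sum>x\<in>{1..L}. g x) = 0 \<and> (\<Sum>x\<in>{1..L}. (g x)\<^sup>2) = 1}"
    by (intro closed_Collect_conj closed_Collect_eq continuous_intros) auto
  ultimately show ?thesis
    unfolding normalized_mean_zero_def by (simp add: compact_Int_closed Collect_conj_eq Int_assoc)
qed

lemma normalized_mean_zero_nonempty:
  assumes "2 \<le> L"
  shows "normalized_mean_zero L \<noteq> {}"
proof -
  define e :: "nat \<Rightarrow> real"
    where "e x = (if x = 1 then 1 / sqrt 2 else if x = 2 then - 1 / sqrt 2 else 0)" for x
  have sub: "{1, 2} \<subseteq> {1..L}" using assms by auto
  have "(\<Sum>x\<in>{1..L}. e x) = (\<Sum>x\<in>{1, 2}. e x)"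
    by (rule sum.mono_neutral_right) (use sub in \<open>auto simp: e_def\<close>)
  moreover have "(\<Sum>x\<in>{1..L}. (e x)\<^sup>2) = (\<Sum>x\<in>{1, 2}. (e x)\<^sup>2)"
    by (rule sum.mono_neutral_right) (use sub in \<open>auto simp: e_def\<close>)
  ultimately have "e \<in> normalized_mean_zero L"
    unfolding normalized_mean_zero_def using assms
    by (simp add: e_def PiE_iff real_le_rsqrt power_divide)
  then show ?thesis by auto
qed

lemma rw_energy_restrict_scaled:
  "rw_energy L c (\<lambda>x. if x \<in> {1..L} then a * g x else 0) = a\<^sup>2 * rw_energy L c g"
  unfolding rw_energy_def sum_distrib_left
proof (intro sum.cong refl)
  fix y assume "y \<in> {1..<L}"
  then show "c y * ((if y \<in> {1..L} then a * g y else 0) -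
                    (if Suc y \<in> {1..L} then a * g (Suc y) else 0))\<^sup>2 =
             a\<^sup>2 * (c y * (g y - g (Suc y))\<^sup>2)"
    by (simp add: power2_eq_square algebra_simps)
qed

lemma rw_poincare_if_le_on_normalized:
  assumes c: "\<And>y. 1 \<le> y \<Longrightarrow> y < L \<Longrightarrow> 0 \<le> c y"
    and le: "\<And>h. h \<in> normalized_mean_zero L \<Longrightarrow> \<gamma> \<le> rw_energy L c h"
  shows "rw_poincare L c \<gamma>"
  unfolding rw_poincare_def
proof (intro allI impI)
  fix h :: "nat \<Rightarrow> real"
  assume mean_zero: "(\<Sum>x\<in>{1..L}. h x) = 0"
  define s where "s = (\<Sum>x\<in>{1..L}. (h x)\<^sup>2)"
  show "\<gamma> * s \<le> rw_energy L c h"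
  proof (cases "s = 0")
    case True
    then show ?thesis using rw_energy_nonneg[OF c] by simp
  next
    case False
    then have "s > 0" unfolding s_def by (metis less_eq_real_def sum_nonneg zero_le_power2)
    define h' where "h' x = (if x \<in> {1..L} then (1 / sqrt s) * h x else 0)" for x
    have "\<bar>h x\<bar> \<le> sqrt s" if "x \<in> {1..L}" for x
      using member_le_sum[of x "{1..L}" "\<lambda>x. (h x)\<^sup>2"] that unfolding s_def
      by (simp add: real_le_rsqrt)
    then have "h' x \<in> (if x \<in> {1..L} then cball 0 1 else {0})" for x
      using \<open>s > 0\<close> by (simp add: h'_def abs_div divide_le_eq_1)
    moreover have "(\<Sum>x\<in>{1..L}. h' x) = 0"
      unfolding h'_def using mean_zero by (simp add: sum_divide_distrib[symmetric])
    moreover have "(\<Sum>x\<in>{1..L}. (h' x)\<^sup>2) = 1"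
      unfolding h'_def using \<open>s > 0\<close>
      by (simp add: power_divide sum_divide_distrib[symmetric] s_def)
    ultimately have "h' \<in> normalized_mean_zero L"
      unfolding normalized_mean_zero_def by (auto simp: PiE_iff simp del: mem_cball)
    then have "\<gamma> \<le> rw_energy L c h / s"
      using le[of h'] \<open>s > 0\<close> unfolding h'_def rw_energy_restrict_scaled
      by (simp add: power_divide)
    then show ?thesis using \<open>s > 0\<close> by (simp add: le_divide_eq)
  qed
qed

lemma continuous_on_rw_energy: "continuous_on UNIV (rw_energy L c)"
  unfolding rw_energy_def by (intro continuous_intros) auto

lemma rw_poincare_minimizer:
  assumes "2 \<le> L" and c: "\<And>y. 1 \<le> y \<Longrightarrow> y < L \<Longrightarrow> 0 \<le> c y"
  obtains g where "(\<Sum>x\<in>{1..L}. g x) = 0" "(\<Sum>x\<in>{1..L}. (g x)\<^sup>2) = 1"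
    "rw_poincare L c (rw_energy L c g)"
proof -
  obtain g where g: "g \<in> normalized_mean_zero L"
    and min: "\<And>h. h \<in> normalized_mean_zero L \<Longrightarrow> rw_energy L c g \<le> rw_energy L c h"
    using continuous_attains_inf[OF compact_normalized_mean_zero
        normalized_mean_zero_nonempty[OF assms(1)]
        continuous_on_subset[OF continuous_on_rw_energy subset_UNIV]]
    by metis
  have "rw_poincare L c (rw_energy L c g)"
    using c min by (rule rw_poincare_if_le_on_normalized)
  with g show thesis
    unfolding normalized_mean_zero_def by (intro that) auto
qed

lemma rw_gap_eigenfunction:
  assumes "2 \<le> L" and c: "\<And>y. 1 \<le> y \<Longrightarrow> y < L \<Longrightarrow> 0 < c y"
  obtains \<gamma> g where "0 < \<gamma>" and "rw_poincare L c \<gamma>"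
    and "\<forall>x\<in>{1..L}. rw_gen L c g x = \<gamma> * g x" and "\<exists>x\<in>{1..L}. g x \<noteq> 0"
proof -
  have c_nonneg: "0 \<le> c y" if "1 \<le> y" "y < L" for y
    using c[OF that] by simp
  obtain g where mean_zero: "(\<Sum>x\<in>{1..L}. g x) = 0" and unit: "(\<Sum>x\<in>{1..L}. (g x)\<^sup>2) = 1"
    and rw: "rw_poincare L c (rw_energy L c g)"
    using assms(1) c_nonneg by (rule rw_poincare_minimizer)
  have nonzero: "\<exists>x\<in>{1..L}. g x \<noteq> 0"
  proof (rule ccontr)
    assume "\<not> ?thesis"
    then have "(\<Sum>x\<in>{1..L}. (g x)\<^sup>2) = 0" by simp
    then show False using unit by simp
  qed
  have "rw_energy L c g \<noteq> 0"
  proof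
    assume "rw_energy L c g = 0"
    then have const: "g x = g 1" if "x \<in> {1..L}" for x
      using rw_energy_eq_0_imp_const[where c=c, OF c _ that] by blast
    have "(\<Sum>x\<in>{1..L}. g x) = (\<Sum>x\<in>{1..L}. g 1)"
      by (rule sum.cong[OF refl const])
    then have "g 1 = 0" using mean_zero assms(1) by simp
    then show False using nonzero const by metis
  qed
  then have pos: "0 < rw_energy L c g"
    using rw_energy_nonneg[OF c_nonneg] by (simp add: order_less_le)
  have "\<forall>x\<in>{1..L}. rw_gen L c g x = rw_energy L c g * g x"
    using rw mean_zero unit by (intro rw_gen_eq_if_poincare_equality) simp_all
  with pos rw nonzero show thesis by (intro that)
qed

lemma exists_config_containing_avoiding:
  assumes "x \<in> {1..L}" "z \<in> {1..L}" "x \<noteq> z" "1 \<le> n" "n \<le> L - 1"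
  obtains A where "A \<in> configs L n" "x \<in> A" "z \<notin> A"
proof -
  obtain k where k: "n = Suc k" using assms(4) by (cases n) auto
  then have "card {A\<in>configs L n. x \<in> A \<and> z \<notin> A} > 0"
    using card_configs_containing_avoiding[OF assms(1-3), of k] assms(5) by simp
  then show thesis
    using that by (auto simp: card_gt_0_iff)
qed

lemma particle_sum_vanishing_imp_zero:
  assumes n: "1 \<le> n" "n \<le> L - 1" and vanish: "\<forall>A\<in>configs L n. particle_sum g A = 0"
    and x: "x \<in> {1..L}"
  shows "g x = 0"
proof -
  have same: "g z = g x" if z: "z \<in> {1..L}" "z \<noteq> x" for z
  proof -
    obtain A where A: "A \<in> configs L n" "x \<in> A" "z \<notin> A"
      using exists_config_containing_avoiding[OF x z(1) z(2)[symmetric] n] .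
    have "finite A" using A(1) by (rule finite_config)
    define A' where "A' = insert z (A - {x})"
    have "card A > 0" using \<open>finite A\<close> A(2) card_gt_0_iff by blast
    then have "A' \<in> configs L n"
      using A z x \<open>finite A\<close> unfolding A'_def configs_def by (auto simp: card_insert_if)
    then have "particle_sum g A' = particle_sum g A"
      using A(1) vanish by simp
    moreover have "particle_sum g A = g x + particle_sum g (A - {x})"
      unfolding particle_sum_def using \<open>finite A\<close> A(2) by (simp add: sum.remove)
    moreover have "particle_sum g A' = g z + particle_sum g (A - {x})"
      unfolding particle_sum_def A'_def using \<open>finite A\<close> A(3) by simp
    ultimately show ?thesis by simp
  qed
  define z where "z = (if x = 1 then 2 else 1 :: nat)"
  have "z \<in> {1..L}" "x \<noteq> z"
    using n by (auto simp: z_def)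
  then obtain A where A: "A \<in> configs L n" "x \<in> A"
    using exists_config_containing_avoiding[OF x _ _ n] by metis
  then have "A \<subseteq> {1..L}" "card A = n" unfolding configs_def by auto
  have "particle_sum g A = (\<Sum>y\<in>A. g x)"
    unfolding particle_sum_def
  proof (rule sum.cong[OF refl])
    fix y assume "y \<in> A"
    then show "g y = g x" using same \<open>A \<subseteq> {1..L}\<close> by (cases "y = x") auto
  qed
  then have "particle_sum g A = real n * g x"
    using \<open>card A = n\<close> by simp
  then show ?thesis using A(1) vanish n by simp
qed

lemma is_eigenvalue_n_particle_sum:
  assumes n: "1 \<le> n" "n \<le> L - 1" and eigen: "\<forall>x\<in>{1..L}. rw_gen L c g x = \<mu> * g x"
    and nonzero: "\<exists>x\<in>{1..L}. g x \<noteq> 0"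
  shows "is_eigenvalue_n L c n \<mu>"
  unfolding is_eigenvalue_n_def
proof (intro exI conjI ballI)
  show "\<exists>A\<in>configs L n. particle_sum g A \<noteq> 0"
    using particle_sum_vanishing_imp_zero[OF n] nonzero by blast
next
  fix A assume A: "A \<in> configs L n"
  then have "A \<subseteq> {1..L}" unfolding configs_def by auto
  then have "particle_sum (rw_gen L c g) A = \<mu> * particle_sum g A"
    unfolding particle_sum_def sum_distrib_left using eigen by (intro sum.cong) auto
  then show "ssep_gen L c (particle_sum g) A = \<mu> * particle_sum g A"
    using ssep_gen_particle_sum[OF finite_config[OF A]] by simp
qed

lemma ssep_poincare_le_eigenvalue:
  assumes "ssep_poincare L c \<gamma>" and "is_eigenvalue_n L c n \<mu>" and "0 < \<mu>"
  shows "\<gamma> \<le> \<mu>"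
proof -
  obtain f where nonzero: "\<exists>A\<in>configs L n. f A \<noteq> 0"
    and eigen: "\<forall>A\<in>configs L n. ssep_gen L c f A = \<mu> * f A"
    using assms(2) unfolding is_eigenvalue_n_def by blast
  have "\<mu> * (\<Sum>A\<in>configs L n. f A) = (\<Sum>A\<in>configs L n. ssep_gen L c f A)"
    using eigen by (simp add: sum_distrib_left)
  also have "\<dots> = 0"
    by (rule sum_ssep_gen_eq_0)
  finally have "\<mu> * (\<Sum>A\<in>configs L n. f A) = 0" .
  then have "(\<Sum>A\<in>configs L n. f A) = 0"
    using \<open>0 < \<mu>\<close> by simp
  then have "\<gamma> * (\<Sum>A\<in>configs L n. (f A)\<^sup>2) \<le> (\<Sum>A\<in>configs L n. f A * ssep_gen L c f A)"
    using assms(1) unfolding ssep_poincare_def by blast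
  also have "\<dots> = \<mu> * (\<Sum>A\<in>configs L n. (f A)\<^sup>2)"
    using eigen by (simp add: sum_distrib_left power2_eq_square algebra_simps)
  finally have "\<gamma> * (\<Sum>A\<in>configs L n. (f A)\<^sup>2) \<le> \<mu> * (\<Sum>A\<in>configs L n. (f A)\<^sup>2)" .
  moreover have "0 < (\<Sum>A\<in>configs L n. (f A)\<^sup>2)"
  proof -
    obtain A where "A \<in> configs L n" "f A \<noteq> 0" using nonzero by blast
    then show ?thesis by (intro sum_pos2[OF finite_configs, of A]) auto
  qed
  ultimately show ?thesis by simp
qed

theorem corollary1:
  fixes L :: nat and c :: "nat \<Rightarrow> real" and n :: nat
  assumes "L \<ge> 2"
    and "\<And>x. 1 \<le> x \<Longrightarrow> x < L \<Longrightarrow> c x > 0"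
    and "1 \<le> n" and "n \<le> L - 1"
  shows "spectral_gap L c n = spectral_gap L c 1"
proof -
  obtain \<gamma> g where "0 < \<gamma>" and rw: "rw_poincare L c \<gamma>"
    and eigen: "\<forall>x\<in>{1..L}. rw_gen L c g x = \<gamma> * g x" and nonzero: "\<exists>x\<in>{1..L}. g x \<noteq> 0"
    using assms(1,2) by (rule rw_gap_eigenfunction)
  have ssep: "ssep_poincare L c \<gamma>"
    using assms(2) \<open>0 < \<gamma>\<close> rw by (intro ssep_poincare_of_rw_poincare) (auto intro: less_imp_le)
  have "spectral_gap L c m = \<gamma>" if "1 \<le> m" "m \<le> L - 1" for m
    unfolding spectral_gap_def
  proof (rule cInf_eq_minimum)
    show "\<gamma> \<in> {\<mu>. 0 < \<mu> \<and> is_eigenvalue_n L c m \<mu>}"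
      using is_eigenvalue_n_particle_sum[OF that eigen nonzero] \<open>0 < \<gamma>\<close> by simp
  qed (use ssep_poincare_le_eigenvalue[OF ssep] in blast)
  then show ?thesis using assms by simp
qed

end
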